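(* Let $\zeta_5=\exp(2\pi i/5)$, $K=\mathbb{Q}(\zeta_5)\subset\mathbb{C}$, $\mathcal{O}_K=\mathbb{Z}[\zeta_5]$, let $\sigma:K\to\mathbb{C}$ be the embedding with $\sigma(\zeta_5)=\zeta_5^2$, and let $\mathcal{S}=\{z\in\mathcal{O}_K : |\sigma(z)|\le 1\}$. If $z_1,z_2\in\mathcal{S}$ with $z_1\neq z_2$ and $|z_1-z_2|<\frac{\sqrt5}{2}$, then $z_1-z_2$ is a unit of $\mathcal{O}_K$.
   Context: Elements of $K$ are regarded as complex numbers via the inclusion $K\subset\mathbb{C}$. *)

theory Defs
  imports Complex_Main
begin

definition zeta5 :: complex where
  "zeta5 = exp (2 * of_real pi * \<i> / 5)"

definition OK5 :: "complex set" where
  "OK5 = {z. \<exists>a::nat \<Rightarrow> int. z = (\<Sum>k<4. of_int (a k) * zeta5 ^ k)}"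

text \<open>The embedding sigma with sigma(zeta5) = zeta5^2, on O_K (coefficients w.r.t. the
  integral basis are unique, so this is well defined).\<close>
definition sigma5 :: "complex \<Rightarrow> complex" where
  "sigma5 z = (THE w. \<exists>a::nat \<Rightarrow> int. z = (\<Sum>k<4. of_int (a k) * zeta5 ^ k)
                    \<and> w = (\<Sum>k<4. of_int (a k) * (zeta5 ^ 2) ^ k))"

definition S5 :: "complex set" where
  "S5 = {z \<in> OK5. cmod (sigma5 z) \<le> 1}"

definition unit_OK5 :: "complex \<Rightarrow> bool" where
  "unit_OK5 u \<longleftrightarrow> u \<in> OK5 \<and> (\<exists>v \<in> OK5. u * v = 1)"

end

theory Submission
  imports Defs
begin

text \<open>\<open>z = z1 - z2\<close> is a nonzero element of \<open>\<int>[zeta5]\<close> with \<open>|z| < sqrt 5 / 2\<close> and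
  \<open>|sigma z| \<le> 2\<close>, so its norm \<open>N(z) = |z|^2 |sigma z|^2\<close> is an integer with \<open>0 < N(z) < 5\<close>.
  Modulo the prime \<open>1 - zeta5\<close> above 5 all conjugates of \<open>z = \<Sum> c k zeta5^k\<close> are congruent
  to \<open>\<Sum> c k\<close>, so every norm is a fourth power modulo 5, i.e. \<open>0\<close> or \<open>1\<close>. Hence \<open>N(z) = 1\<close>,
  and the product of the three other conjugates of \<open>z\<close> is its inverse in \<open>\<int>[zeta5]\<close>.\<close>

lemma Im_zeta5_pos: "Im zeta5 > 0"
proof -
  have "Im zeta5 = sin (2 * pi / 5)"
    unfolding zeta5_def by (simp add: Im_exp)
  also have "\<dots> > 0"
    by (rule sin_gt_zero) auto
  finally show ?thesis .
qed

lemma zeta5_neq_1: "zeta5 \<noteq> 1"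
  using Im_zeta5_pos by auto

lemma zeta5_pow_5: "zeta5 ^ 5 = 1"
proof -
  have "zeta5 ^ 5 = exp (of_nat 5 * (2 * of_real pi * \<i> / 5))"
    unfolding zeta5_def by (rule exp_of_nat_mult[symmetric])
  also have "of_nat 5 * (2 * of_real pi * \<i> / 5) = 2 * of_real pi * (\<i> :: complex)"
    by simp
  finally show ?thesis
    by simp
qed

lemma cnj_zeta5: "cnj zeta5 = zeta5 ^ 4"
proof -
  have "cmod zeta5 = 1"
    unfolding zeta5_def by (simp add: norm_exp_eq_Re)
  then have "zeta5 * cnj zeta5 = 1"
    using complex_norm_square[of zeta5] by simp
  then have "zeta5 ^ 4 * (zeta5 * cnj zeta5) = zeta5 ^ 4"
    by simp
  then have "zeta5 ^ 5 * cnj zeta5 = zeta5 ^ 4"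
    by (simp add: algebra_simps eval_nat_numeral)
  then show ?thesis
    using zeta5_pow_5 by simp
qed

lemma root_of_unity_5_sum:
  fixes w :: "'a :: field"
  assumes "w ^ 5 = 1" and "w \<noteq> 1"
  shows "1 + w + w\<^sup>2 + w ^ 3 + w ^ 4 = 0"
proof -
  have "(w - 1) * (1 + w + w\<^sup>2 + w ^ 3 + w ^ 4) = 0"
    using assms(1) by (simp add: algebra_simps eval_nat_numeral)
  then show ?thesis
    using assms(2) by simp
qed

lemmas zeta5_sum = root_of_unity_5_sum[OF zeta5_pow_5 zeta5_neq_1]

lemma zeta5_sq_pow_5: "(zeta5\<^sup>2) ^ 5 = 1"
  by (metis power_mult_distrib power_one zeta5_pow_5 power_mult mult.commute)

lemma zeta5_sq_neq_1: "zeta5\<^sup>2 \<noteq> 1"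
proof
  assume "zeta5\<^sup>2 = 1"
  then have "zeta5 ^ 5 = zeta5"
    by (simp add: eval_nat_numeral)
  then show False
    using zeta5_pow_5 zeta5_neq_1 by simp
qed

lemma zeta5_pow_8: "zeta5 ^ 8 = zeta5 ^ 3"
proof -
  have "zeta5 ^ 8 = zeta5 ^ 5 * zeta5 ^ 3"
    by (simp flip: power_add)
  then show ?thesis
    by (simp add: zeta5_pow_5)
qed

definition poly4 :: "(nat \<Rightarrow> int) \<Rightarrow> complex \<Rightarrow> complex" where
  "poly4 c w = (\<Sum>k<4. of_int (c k) * w ^ k)"

lemma poly4_expand:
  "poly4 c w = of_int (c 0) + of_int (c 1) * w + of_int (c 2) * w\<^sup>2 + of_int (c 3) * w ^ 3"
  by (simp add: poly4_def eval_nat_numeral)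

lemma OK5_iff_poly4: "z \<in> OK5 \<longleftrightarrow> (\<exists>c. z = poly4 c zeta5)"
  by (simp add: OK5_def poly4_def)

lemma poly4_diff: "poly4 (\<lambda>k. a k - b k) w = poly4 a w - poly4 b w"
  by (simp add: poly4_def algebra_simps sum_subtractf)

lemma poly4_add: "poly4 (\<lambda>k. a k + b k) w = poly4 a w + poly4 b w"
  by (simp add: poly4_def algebra_simps sum.distrib)

lemma poly4_of_int_mult: "poly4 (\<lambda>k. m * c k) w = of_int m * poly4 c w"
  by (simp add: poly4_def sum_distrib_left mult.assoc)

lemma cnj_poly4: "cnj (poly4 c w) = poly4 c (cnj w)"
  by (simp add: poly4_def)

lemma golden_form_eq_0_iff:
  fixes x y :: int
  shows "x\<^sup>2 - x * y - y\<^sup>2 = 0 \<longleftrightarrow> x = 0 \<and> y = 0"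
proof
  show "x\<^sup>2 - x * y - y\<^sup>2 = 0 \<Longrightarrow> x = 0 \<and> y = 0"
  proof (induction "nat (\<bar>x\<bar> + \<bar>y\<bar>)" arbitrary: x y rule: less_induct)
    case less
    have "even x \<and> even y"
      using less.prems
      by (cases "even x"; cases "even y") (auto simp: power2_eq_square dest: arg_cong[of _ _ even])
    then obtain x' y' where xy: "x = 2 * x'" "y = 2 * y'"
      by (auto elim!: evenE)
    have "x'\<^sup>2 - x' * y' - y'\<^sup>2 = 0"
      using less.prems unfolding xy by algebra
    moreover have "nat (\<bar>x'\<bar> + \<bar>y'\<bar>) < nat (\<bar>x\<bar> + \<bar>y\<bar>)" if "x \<noteq> 0 \<or> y \<noteq> 0"
      using that unfolding xy by auto
    ultimately show "x = 0 \<and> y = 0"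
      using less.hyps xy by fastforce
  qed
qed simp

lemma golden_lin_indep:
  fixes \<tau> :: real
  assumes \<tau>: "\<tau>\<^sup>2 + \<tau> - 1 = 0" and "of_int a + of_int b * \<tau> = 0"
  shows "a = 0 \<and> b = 0"
proof -
  have a: "of_int a = - of_int b * \<tau>"
    using assms(2) by simp
  have "(of_int (a\<^sup>2 - a * b - b\<^sup>2) :: real) = of_int b ^ 2 * (\<tau>\<^sup>2 + \<tau> - 1)"
    by (simp add: a power2_eq_square algebra_simps)
  then have "(of_int (a\<^sup>2 - a * b - b\<^sup>2) :: real) = 0"
    by (simp only: \<tau> mult_zero_right)
  then have "a\<^sup>2 - a * b - b\<^sup>2 = 0"
    by (simp only: of_int_eq_0_iff)
  then show ?thesis
    by (simp only: golden_form_eq_0_iff)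
qed

text \<open>With \<open>\<tau> = zeta5 + zeta5^4 = 2 cos(2 pi / 5)\<close>, every \<open>poly4 c zeta5\<close> is
  \<open>X + zeta5 Y\<close> with \<open>X, Y \<in> \<int>[\<tau>]\<close> real; \<open>Im zeta5 > 0\<close> separates \<open>X\<close> from \<open>Y\<close>,
  and the irrationality of \<open>\<tau>\<close> separates the integer coordinates.\<close>
lemma poly4_zeta5_eq_0_imp:
  assumes "poly4 c zeta5 = 0"
  shows "c 0 = 0 \<and> c 1 = 0 \<and> c 2 = 0 \<and> c 3 = 0"
proof -
  define \<tau> where "\<tau> = 2 * Re zeta5"
  have \<tau>_eq: "of_real \<tau> = zeta5 + zeta5 ^ 4"
    unfolding \<tau>_def using complex_add_cnj[of zeta5] cnj_zeta5 by simp
  have "(zeta5 + zeta5 ^ 4)\<^sup>2 + (zeta5 + zeta5 ^ 4) - 1 = 0"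
    using zeta5_pow_5 zeta5_sum by algebra
  then have \<tau>_quadratic: "\<tau>\<^sup>2 + \<tau> - 1 = 0"
    by (metis \<tau>_eq of_real_1 of_real_add of_real_diff of_real_eq_0_iff of_real_power)
  define X where "X = of_int (c 0) - of_int (c 2) - of_int (c 3) * \<tau>"
  define Y where "Y = of_int (c 1) + (of_int (c 2) - of_int (c 3)) * \<tau>"
  have "poly4 c zeta5 = of_real X + zeta5 * of_real Y"
    unfolding X_def Y_def poly4_expand of_real_add of_real_diff of_real_mult \<tau>_eq
    using zeta5_pow_5 zeta5_sum by simp algebra
  then have XY: "of_real X + zeta5 * of_real Y = 0"
    using assms by simp
  then have "Im (of_real X + zeta5 * of_real Y) = 0"
    by simp
  then have "Im zeta5 * Y = 0"
    by simp
  then have "Y = 0"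
    using Im_zeta5_pos by simp
  moreover from this have "X = 0"
    using XY by simp
  ultimately show ?thesis
    using golden_lin_indep[OF \<tau>_quadratic, of "c 1" "c 2 - c 3"]
      golden_lin_indep[OF \<tau>_quadratic, of "c 0 - c 2" "- c 3"]
    unfolding X_def Y_def by simp
qed

lemma poly4_zeta5_coeffs_unique:
  assumes "poly4 a zeta5 = poly4 b zeta5" and "k < 4"
  shows "a k = b k"
proof -
  have "poly4 (\<lambda>k. a k - b k) zeta5 = 0"
    using assms(1) by (simp add: poly4_diff)
  from poly4_zeta5_eq_0_imp[OF this] have "\<forall>k<4. a k = b k"
    by (auto simp: less_Suc_eq numeral_eq_Suc)
  with assms(2) show ?thesis
    by simp
qed

lemma sigma5_poly4: "sigma5 (poly4 c zeta5) = poly4 c (zeta5\<^sup>2)"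
  unfolding sigma5_def poly4_def[symmetric]
proof (rule the_equality)
  show "\<exists>a. poly4 c zeta5 = poly4 a zeta5 \<and> poly4 c (zeta5\<^sup>2) = poly4 a (zeta5\<^sup>2)"
    by blast
next
  fix w
  assume "\<exists>a. poly4 c zeta5 = poly4 a zeta5 \<and> w = poly4 a (zeta5\<^sup>2)"
  then obtain a where a: "poly4 c zeta5 = poly4 a zeta5" and w: "w = poly4 a (zeta5\<^sup>2)"
    by blast
  show "w = poly4 c (zeta5\<^sup>2)"
    unfolding w poly4_def using poly4_zeta5_coeffs_unique[OF a] by (intro sum.cong) auto
qed

lemma sigma5_diff:
  assumes "x \<in> OK5" and "y \<in> OK5"
  shows "sigma5 (x - y) = sigma5 x - sigma5 y"
  using assms by (auto simp: OK5_iff_poly4 sigma5_poly4 poly4_diff[symmetric])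

lemma zero_in_OK5: "0 \<in> OK5"
  using poly4_def[of "\<lambda>_. 0"] by (auto simp: OK5_iff_poly4)

lemma one_in_OK5: "1 \<in> OK5"
  unfolding OK5_iff_poly4 poly4_expand by (rule exI[of _ "\<lambda>k. if k = 0 then 1 else 0"]) simp

lemma OK5_add: "x \<in> OK5 \<Longrightarrow> y \<in> OK5 \<Longrightarrow> x + y \<in> OK5"
  by (metis OK5_iff_poly4 poly4_add)

lemma OK5_of_int_mult: "x \<in> OK5 \<Longrightarrow> of_int m * x \<in> OK5"
  by (metis OK5_iff_poly4 poly4_of_int_mult)

lemma OK5_sum: "finite A \<Longrightarrow> (\<And>i. i \<in> A \<Longrightarrow> f i \<in> OK5) \<Longrightarrow> sum f A \<in> OK5"
  by (induction A rule: finite_induct) (auto intro: zero_in_OK5 OK5_add)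

lemma zeta5_mult_OK5:
  assumes "x \<in> OK5"
  shows "zeta5 * x \<in> OK5"
proof -
  obtain a where x: "x = poly4 a zeta5"
    using assms by (auto simp: OK5_iff_poly4)
  have "zeta5 * x = poly4 (\<lambda>k. (if k = 0 then 0 else a (k - 1)) - a 3) zeta5"
    unfolding x poly4_expand using zeta5_sum by simp algebra
  then show ?thesis
    by (auto simp: OK5_iff_poly4)
qed

lemma zeta5_pow_mult_OK5: "x \<in> OK5 \<Longrightarrow> zeta5 ^ k * x \<in> OK5"
  by (induction k) (auto simp: mult.assoc intro: zeta5_mult_OK5)

lemma OK5_mult:
  assumes "x \<in> OK5" and "y \<in> OK5"
  shows "x * y \<in> OK5"
proof -
  obtain b where y: "y = poly4 b zeta5"
    using assms(2) by (auto simp: OK5_iff_poly4)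
  have "x * y = (\<Sum>k<4. of_int (b k) * (zeta5 ^ k * x))"
    unfolding y poly4_def sum_distrib_left by (simp add: algebra_simps)
  also have "\<dots> \<in> OK5"
    using assms(1) by (intro OK5_sum OK5_of_int_mult zeta5_pow_mult_OK5) auto
  finally show ?thesis .
qed

lemma OK5_power: "x \<in> OK5 \<Longrightarrow> x ^ n \<in> OK5"
  by (induction n) (auto intro: one_in_OK5 OK5_mult)

lemma poly4_in_OK5: "w \<in> OK5 \<Longrightarrow> poly4 c w \<in> OK5"
  unfolding poly4_def by (intro OK5_sum OK5_of_int_mult OK5_power) auto

lemma zeta5_in_OK5: "zeta5 \<in> OK5"
  using zeta5_mult_OK5[OF one_in_OK5] by simp

definition absq_const :: "(nat \<Rightarrow> int) \<Rightarrow> int" where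
  "absq_const c = (c 0 ^ 2 + c 1 ^ 2 + c 2 ^ 2 + c 3 ^ 2) - (c 0 * c 2 + c 1 * c 3 + c 0 * c 3)"

definition absq_tau :: "(nat \<Rightarrow> int) \<Rightarrow> int" where
  "absq_tau c = (c 0 * c 1 + c 1 * c 2 + c 2 * c 3) - (c 0 * c 2 + c 1 * c 3 + c 0 * c 3)"

definition norm5 :: "(nat \<Rightarrow> int) \<Rightarrow> int" where
  "norm5 c = absq_const c ^ 2 - absq_const c * absq_tau c - absq_tau c ^ 2"

lemma poly4_mult_poly4_pow4:
  assumes "w ^ 5 = 1" and "w \<noteq> 1"
  shows "poly4 c w * poly4 c (w ^ 4) = of_int (absq_const c) + of_int (absq_tau c) * (w + w ^ 4)"
  unfolding poly4_expand absq_const_def absq_tau_def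
  using assms(1) root_of_unity_5_sum[OF assms]
  by (simp only: of_int_add of_int_diff of_int_mult of_int_power) algebra

lemma poly4_conjugates_prod:
  "poly4 c zeta5 * poly4 c (zeta5 ^ 4) * (poly4 c (zeta5\<^sup>2) * poly4 c (zeta5 ^ 3))
     = of_int (norm5 c)"
proof -
  define t where "t = zeta5 + zeta5 ^ 4"
  define u where "u = zeta5\<^sup>2 + zeta5 ^ 3"
  have tu: "t + u = -1" "t * u = -1"
    unfolding t_def u_def using zeta5_sum zeta5_pow_5 by algebra+
  have "poly4 c (zeta5\<^sup>2) * poly4 c (zeta5 ^ 3)
      = of_int (absq_const c) + of_int (absq_tau c) * u"
    using poly4_mult_poly4_pow4[OF zeta5_sq_pow_5 zeta5_sq_neq_1, of c]
    by (simp add: u_def zeta5_pow_8 flip: power_mult)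
  moreover have "poly4 c zeta5 * poly4 c (zeta5 ^ 4)
      = of_int (absq_const c) + of_int (absq_tau c) * t"
    using poly4_mult_poly4_pow4[OF zeta5_pow_5 zeta5_neq_1, of c] by (simp add: t_def)
  ultimately show ?thesis
    unfolding norm5_def using tu
    by (simp only: of_int_diff of_int_mult of_int_power) algebra
qed

lemma cmod_sq_poly4_zeta5:
  "of_real ((cmod (poly4 c zeta5))\<^sup>2) = poly4 c zeta5 * poly4 c (zeta5 ^ 4)"
  unfolding complex_norm_square by (simp add: cnj_poly4 cnj_zeta5)

lemma cmod_sq_sigma5_poly4_zeta5:
  "of_real ((cmod (sigma5 (poly4 c zeta5)))\<^sup>2) = poly4 c (zeta5\<^sup>2) * poly4 c (zeta5 ^ 3)"
proof -
  have "cnj (zeta5\<^sup>2) = zeta5 ^ 3"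
    by (simp add: cnj_zeta5 zeta5_pow_8 flip: power_mult)
  then show ?thesis
    unfolding complex_norm_square by (simp add: cnj_poly4 sigma5_poly4)
qed

lemma cmod_sq_mult_cmod_sigma5_sq:
  "(cmod (poly4 c zeta5))\<^sup>2 * (cmod (sigma5 (poly4 c zeta5)))\<^sup>2 = of_int (norm5 c)"
proof -
  have "complex_of_real ((cmod (poly4 c zeta5))\<^sup>2 * (cmod (sigma5 (poly4 c zeta5)))\<^sup>2)
      = of_real (of_int (norm5 c))"
    by (simp only: of_real_mult cmod_sq_poly4_zeta5 cmod_sq_sigma5_poly4_zeta5
        poly4_conjugates_prod of_real_of_int_eq)
  then show ?thesis
    by (simp only: of_real_eq_iff)
qed

lemma norm5_neq_0:
  assumes "poly4 c zeta5 \<noteq> 0"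
  shows "norm5 c \<noteq> 0"
proof
  assume "norm5 c = 0"
  then have "absq_const c = 0" and "absq_tau c = 0"
    unfolding norm5_def by (simp_all only: golden_form_eq_0_iff)
  then have "poly4 c zeta5 * poly4 c (zeta5 ^ 4) = 0"
    using poly4_mult_poly4_pow4[OF zeta5_pow_5 zeta5_neq_1, of c] by simp
  then have "complex_of_real ((cmod (poly4 c zeta5))\<^sup>2) = 0"
    unfolding cmod_sq_poly4_zeta5 .
  with assms show False
    by simp
qed

lemma fourth_power_mod_5: "(s :: int) ^ 4 mod 5 \<in> {0, 1}"
proof -
  have "s mod 5 \<in> {0, 1, 2, 3, 4}"
    by auto
  then have "(s mod 5) ^ 4 mod 5 \<in> {0, 1}"
    by auto
  then show ?thesis
    by (simp add: power_mod)
qed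

lemma norm5_mod_5: "norm5 c mod 5 \<in> {0, 1}"
proof -
  define s where "s = c 0 + c 1 + c 2 + c 3"
  define B where "B = c 0 * c 2 + c 1 * c 3 + c 0 * c 3"
  define X where "X = absq_const c"
  define Y where "Y = absq_tau c"
  define r where "r = 5 * B\<^sup>2 - 2 * s\<^sup>2 * B - X * Y - Y\<^sup>2"
  have "X + 2 * Y = s\<^sup>2 - 5 * B"
    unfolding X_def Y_def s_def B_def absq_const_def absq_tau_def by algebra
  then have "norm5 c = s ^ 4 + 5 * r"
    unfolding norm5_def X_def[symmetric] Y_def[symmetric] r_def by algebra
  then have "norm5 c mod 5 = s ^ 4 mod 5"
    by (simp only: mod_mult_self2)
  then show ?thesis
    using fourth_power_mod_5 by simp
qed

lemma unit_OK5_poly4_if_norm5_eq_1: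
  assumes "norm5 c = 1"
  shows "unit_OK5 (poly4 c zeta5)"
  unfolding unit_OK5_def
proof (intro conjI bexI)
  show "poly4 c zeta5 \<in> OK5"
    by (auto simp: OK5_iff_poly4)
  show "poly4 c (zeta5 ^ 4) * (poly4 c (zeta5\<^sup>2) * poly4 c (zeta5 ^ 3)) \<in> OK5"
    by (intro OK5_mult poly4_in_OK5 OK5_power zeta5_in_OK5)
  show "poly4 c zeta5 * (poly4 c (zeta5 ^ 4) * (poly4 c (zeta5\<^sup>2) * poly4 c (zeta5 ^ 3))) = 1"
    using poly4_conjugates_prod[of c] assms by (simp add: mult.assoc)
qed

theorem mainTheorem6:
  assumes "z1 \<in> S5" and "z2 \<in> S5" and "z1 \<noteq> z2"
    and "cmod (z1 - z2) < sqrt 5 / 2"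
  shows "unit_OK5 (z1 - z2)"
proof -
  have z1: "z1 \<in> OK5" "cmod (sigma5 z1) \<le> 1" and z2: "z2 \<in> OK5" "cmod (sigma5 z2) \<le> 1"
    using assms(1,2) by (auto simp: S5_def)
  then obtain c where c: "z1 - z2 = poly4 c zeta5"
    by (metis OK5_iff_poly4 poly4_diff)
  have N: "of_int (norm5 c) = (cmod (z1 - z2))\<^sup>2 * (cmod (sigma5 (z1 - z2)))\<^sup>2"
    unfolding c by (simp add: cmod_sq_mult_cmod_sigma5_sq)
  have "cmod (sigma5 (z1 - z2)) \<le> 2"
    using norm_triangle_ineq4[of "sigma5 z1" "sigma5 z2"] z1 z2 by (simp add: sigma5_diff)
  then have "(cmod (sigma5 (z1 - z2)))\<^sup>2 \<le> 2\<^sup>2"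
    by (intro power_mono) simp_all
  then have "of_int (norm5 c) \<le> (cmod (z1 - z2))\<^sup>2 * 4"
    unfolding N by (intro mult_left_mono) simp_all
  moreover have "(cmod (z1 - z2))\<^sup>2 < (sqrt 5 / 2)\<^sup>2"
    using assms(4) by (intro power_strict_mono) simp_all
  ultimately have "norm5 c < 5"
    by (simp add: power_divide)
  moreover have "norm5 c \<ge> 0"
    using N by (metis of_int_0_le_iff zero_le_mult_iff zero_le_power2)
  moreover have "norm5 c \<noteq> 0"
    using assms(3) by (intro norm5_neq_0) (simp flip: c)
  ultimately have "norm5 c = 1"
    using norm5_mod_5[of c] by auto
  then show ?thesis
    using unit_OK5_poly4_if_norm5_eq_1 c by simp
qed

end
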